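(* Let $C_{(1)}$ and $C_{(3)}$ denote the class sums in $\mathbb Z S_4$ of the transpositions and of the 4-cycles, respectively. A set of two odd monomials $m_\mu(L_1,\dots,L_4)$ (partitions $\mu$ with $|\mu|$ odd and at most three parts) has $\mathbb Z$-span equal to $\mathbb Z C_{(1)}\oplus\mathbb Z C_{(3)}$ if and only if it is $\{m_1,m_{1,1,1}\}$ or $\{m_1,m_3\}$.
   Context: $S_4$ is the symmetric group on $\{1,2,3,4\}$ and $\mathbb Z S_4$ its integral group ring. The Jucys–Murphy elements are $L_1=0$ and $L_i=\sum_{k=1}^{i-1}(k\ i)$ for $i=2,3,4$; they pairwise commute. For a partition $\mu=(\mu_1,\dots,\mu_r)$, $m_\mu(x_1,\dots,x_4)$ is the monomial symmetric polynomial: the sum of all distinct monomials $x_1^{\alpha_1}\cdots x_4^{\alpha_4}$ with $(\alpha_1,\dots,\alpha_4)$ a rearrangement of $(\mu_1,\dots,\mu_r,0,\dots,0)$; subscripts are written without parentheses. For $|\mu|$ odd, $m_\mu(L_1,\dots,L_4)$ is a $\mathbb Z$-linear combination of $C_{(1)}$ and $C_{(3)}$. *)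

theory Defs
  imports "HOL-Combinatorics.Combinatorics" "HOL-Library.Multiset"
begin

definition S4 :: "(nat \<Rightarrow> nat) set" where
  "S4 = {p. p permutes {1..4}}"

text \<open>Elements of the integral group ring Z S_4: integer-valued functions on
  permutations, supported on S4 (coefficient of each group element).\<close>
type_synonym zs4 = "(nat \<Rightarrow> nat) \<Rightarrow> int"

definition gr_basis :: "(nat \<Rightarrow> nat) \<Rightarrow> zs4" where
  "gr_basis p = (\<lambda>g. if g = p then 1 else 0)"

definition gr_zero :: zs4 where "gr_zero = (\<lambda>g. 0)"
definition gr_one :: zs4 where "gr_one = gr_basis id"
definition gr_add :: "zs4 \<Rightarrow> zs4 \<Rightarrow> zs4" where "gr_add x y = (\<lambda>g. x g + y g)"
definition gr_smult :: "int \<Rightarrow> zs4 \<Rightarrow> zs4" where "gr_smult a x = (\<lambda>g. a * x g)"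

text \<open>Convolution product; gr_basis a times gr_basis b = gr_basis (a o b).\<close>
definition gr_mult :: "zs4 \<Rightarrow> zs4 \<Rightarrow> zs4" where
  "gr_mult x y = (\<lambda>g. if g \<in> S4 then (\<Sum>h\<in>S4. x h * y (inv h \<circ> g)) else 0)"

fun gr_pow :: "zs4 \<Rightarrow> nat \<Rightarrow> zs4" where
  "gr_pow x 0 = gr_one"
| "gr_pow x (Suc n) = gr_mult x (gr_pow x n)"

definition gr_sum :: "('i \<Rightarrow> zs4) \<Rightarrow> 'i set \<Rightarrow> zs4" where
  "gr_sum f A = (\<lambda>g. \<Sum>i\<in>A. f i g)"

definition gr_prod_list :: "zs4 list \<Rightarrow> zs4" where
  "gr_prod_list xs = foldr gr_mult xs gr_one"

definition JM :: "nat \<Rightarrow> zs4" where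
  "JM i = gr_sum (\<lambda>k. gr_basis (transpose k i)) {1..<i}"

definition is_partition :: "nat list \<Rightarrow> bool" where
  "is_partition mu \<longleftrightarrow> sorted (rev mu) \<and> (\<forall>x\<in>set mu. 0 < x)"

definition m_JM :: "nat list \<Rightarrow> zs4" where
  "m_JM mu = gr_sum (\<lambda>\<alpha>. gr_prod_list (map (\<lambda>i. gr_pow (JM (i+1)) (\<alpha> ! i)) [0..<4]))
     {\<alpha>. length \<alpha> = 4 \<and> length mu \<le> 4 \<and>
          mset \<alpha> = mset (mu @ replicate (4 - length mu) 0)}"

definition C1 :: zs4 where
  "C1 = gr_sum gr_basis {transpose a b | a b. a \<in> {1..4} \<and> b \<in> {1..4} \<and> a \<noteq> b}"

definition C3 :: zs4 where
  "C3 = gr_sum gr_basis {cycle_of_list cs | cs. distinct cs \<and> set cs = {1..4}}"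

definition Zspan2 :: "zs4 \<Rightarrow> zs4 \<Rightarrow> zs4 set" where
  "Zspan2 x y = {gr_add (gr_smult a x) (gr_smult b y) | a b. True}"

end

theory Submission
  imports Defs
begin

(*
  The Jucys-Murphy elements act diagonally on ten integral simultaneous
  eigenvectors F_0, ..., F_9 of Z S_4, one for each standard tableau with four boxes: L_k acts
  on F_t by the content of box k in tableau t.  With integer weights w_t we have
  sum w_t F_t = 48, and two further combinations of the F_t equal 4 (C_(1) + C_(3)) and
  12 (C_(1) - C_(3)).  These finitely many identities are certified by evaluation in an explicit
  model of S_4 by words.  Hence 48 m_mu(L) = sum w_t m_mu(contents of t) F_t, and for |mu| odd
  the symmetry and homogeneity of m_mu give
     12 m_mu(L) = (p + 3q) C_(1) + (p - 3q) C_(3),   p = m_mu(1,2,3),  q = m_mu(1,2,-1).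
  Two such elements span Z C_(1) + Z C_(3) iff their coefficient determinant is +-1, i.e. iff
  |q_mu p_nu - p_mu q_nu| = 24.  The remaining sections decide this arithmetic condition from
  explicit formulas for p and q: divisibility by powers of 2, size estimates, and, for one
  family, a computation modulo 585 = 9 * 5 * 13 exploiting the periodicity of powers.
*)

section \<open>A concrete model of S_4 by words\<close>

definition perm_of_word :: "nat list \<Rightarrow> nat \<Rightarrow> nat" where
  "perm_of_word w i = (if 1 \<le> i \<and> i \<le> 4 then w ! (i - 1) else i)"

definition S4_words :: "nat list list" where
  "S4_words = [[1,2,3,4],[1,2,4,3],[1,3,2,4],[1,3,4,2],[1,4,2,3],[1,4,3,2],[2,1,3,4],[2,1,4,3],
    [2,3,1,4],[2,3,4,1],[2,4,1,3],[2,4,3,1],[3,1,2,4],[3,1,4,2],[3,2,1,4],[3,2,4,1],[3,4,1,2],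
    [3,4,2,1],[4,1,2,3],[4,1,3,2],[4,2,1,3],[4,2,3,1],[4,3,1,2],[4,3,2,1]]"

lemma set_S4_words: "set S4_words = {w. distinct w \<and> set w = {1..4}}"
proof -
  have "set S4_words = set (permutations_of_set_list [1,2,3,4::nat])"
    by code_simp
  also have "\<dots> = permutations_of_set {1..4}"
  proof -
    have "{1..4::nat} = set [1,2,3,4]" by auto
    then show ?thesis using permutations_of_list[of "[1,2,3,4::nat]"] by simp
  qed
  finally show ?thesis by (auto simp: permutations_of_set_def)
qed

lemma length_S4_word: "w \<in> set S4_words \<Longrightarrow> length w = 4"
  using distinct_card[of w] by (auto simp: set_S4_words)

lemma perm_of_word_permutes:
  assumes "w \<in> set S4_words" shows "perm_of_word w permutes {1..4}"
proof -
  have dist: "distinct w" and set_w: "set w = {1..4}" and len: "length w = 4"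
    using assms length_S4_word by (auto simp: set_S4_words)
  have image: "perm_of_word w ` {1..4} = set w"
  proof -
    have "perm_of_word w ` {1..4} = (\<lambda>i. w ! i) ` {0..<4}"
      by (force simp: perm_of_word_def image_iff)
    then show ?thesis using len by (auto simp: set_conv_nth)
  qed
  have "inj_on (perm_of_word w) {1..4}"
    using dist len by (force simp: inj_on_def perm_of_word_def nth_eq_iff_index_eq)
  then have "bij_betw (perm_of_word w) {1..4} {1..4}"
    using image set_w by (simp add: bij_betw_def)
  then show ?thesis
    by (rule bij_imp_permutes) (auto simp: perm_of_word_def)
qed

definition word_of_perm :: "(nat \<Rightarrow> nat) \<Rightarrow> nat list" where
  "word_of_perm p = map p [1,2,3,4]"

lemma perm_of_word_of_perm:
  assumes "p permutes {1..4::nat}" shows "perm_of_word (word_of_perm p) = p"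
proof
  fix i show "perm_of_word (word_of_perm p) i = p i"
  proof (cases "1 \<le> i \<and> i \<le> 4")
    case True then have "i \<in> {1,2,3,4}" by auto
    then show ?thesis by (auto simp: perm_of_word_def word_of_perm_def)
  next
    case False then show ?thesis using permutes_not_in[OF assms] by (auto simp: perm_of_word_def)
  qed
qed

lemma word_of_perm_in_S4_words:
  assumes "p permutes {1..4::nat}" shows "word_of_perm p \<in> set S4_words"
proof -
  have "distinct (map p [1,2,3,4])" using permutes_inj[OF assms] by (simp add: inj_eq)
  moreover have "set (map p [1,2,3,4]) = p ` {1..4}"
  proof -
    have "{1..4::nat} = {1,2,3,4}" by auto
    then show ?thesis by simp
  qed
  ultimately show ?thesis using permutes_image[OF assms] by (simp add: set_S4_words word_of_perm_def)
qed

lemma S4_eq_words: "S4 = perm_of_word ` set S4_words"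
  using perm_of_word_of_perm word_of_perm_in_S4_words perm_of_word_permutes
  by (force simp: S4_def)

lemma perm_of_word_inj:
  assumes "v \<in> set S4_words" "w \<in> set S4_words" "perm_of_word v = perm_of_word w"
  shows "v = w"
proof (rule nth_equalityI)
  show len: "length v = length w" using assms length_S4_word by simp
  fix i assume "i < length v"
  then have "perm_of_word v (i + 1) = perm_of_word w (i + 1)" "i < 4"
    using assms(1,3) length_S4_word by auto
  then show "v ! i = w ! i" by (simp add: perm_of_word_def)
qed

definition compose_words :: "nat list \<Rightarrow> nat list \<Rightarrow> nat list" where
  "compose_words v w = map (\<lambda>j. v ! (j - 1)) w"

lemma perm_of_word_compose:
  assumes "v \<in> set S4_words" "w \<in> set S4_words"
  shows "perm_of_word v \<circ> perm_of_word w = perm_of_word (compose_words v w)"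
proof
  fix i
  have len: "length w = 4" and set_w: "set w = {1..4}"
    using assms(2) length_S4_word by (auto simp: set_S4_words)
  show "(perm_of_word v \<circ> perm_of_word w) i = perm_of_word (compose_words v w) i"
  proof (cases "1 \<le> i \<and> i \<le> 4")
    case True
    then have "w ! (i - 1) \<in> {1..4}" using len set_w nth_mem[of "i - 1" w] by auto
    then show ?thesis using True len by (auto simp: perm_of_word_def compose_words_def)
  qed (auto simp: perm_of_word_def)
qed


lemma finite_S4: "finite S4"
  by (simp add: S4_eq_words)

lemma S4_permutes: "a \<in> S4 \<Longrightarrow> a permutes {1..4}"
  by (simp add: S4_def)

lemma S4_compose: "a \<in> S4 \<Longrightarrow> b \<in> S4 \<Longrightarrow> a \<circ> b \<in> S4"
  by (simp add: S4_def permutes_compose)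

lemma S4_inv: "a \<in> S4 \<Longrightarrow> inv a \<in> S4"
  by (simp add: S4_def permutes_inv)

lemma S4_id: "id \<in> S4"
  by (simp add: S4_def permutes_id)

lemma S4_inv_cancel: "a \<in> S4 \<Longrightarrow> inv a \<circ> (a \<circ> b) = b" "a \<in> S4 \<Longrightarrow> a \<circ> (inv a \<circ> b) = b"
  using permutes_inv_o[OF S4_permutes] by (simp_all add: o_assoc)

lemma gr_mult_add_left: "gr_mult (gr_add x y) z = gr_add (gr_mult x z) (gr_mult y z)"
  by (rule ext) (simp add: gr_mult_def gr_add_def distrib_right sum.distrib)

lemma gr_mult_add_right: "gr_mult z (gr_add x y) = gr_add (gr_mult z x) (gr_mult z y)"
  by (rule ext) (simp add: gr_mult_def gr_add_def distrib_left sum.distrib)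

lemma gr_mult_smult_left: "gr_mult (gr_smult c x) z = gr_smult c (gr_mult x z)"
  by (rule ext) (simp add: gr_mult_def gr_smult_def sum_distrib_left mult.assoc)

lemma gr_mult_smult_right: "gr_mult z (gr_smult c x) = gr_smult c (gr_mult z x)"
  by (rule ext) (simp add: gr_mult_def gr_smult_def sum_distrib_left mult.left_commute)

lemma gr_mult_zero: "gr_mult gr_zero z = gr_zero" "gr_mult z gr_zero = gr_zero"
  by (simp_all add: gr_mult_def gr_zero_def fun_eq_iff)

lemma gr_smult_smult: "gr_smult a (gr_smult b x) = gr_smult (a * b) x"
  by (rule ext) (simp add: gr_smult_def)

lemma gr_mult_sum_right:
  "gr_mult x (gr_sum f A) = gr_sum (\<lambda>i. gr_mult x (f i)) A"
proof
  fix g show "gr_mult x (gr_sum f A) g = gr_sum (\<lambda>i. gr_mult x (f i)) A g"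
    by (cases "g \<in> S4") (simp_all add: gr_mult_def gr_sum_def sum_distrib_left sum.swap[of _ A])
qed

lemma sum_S4_basis: "a \<in> S4 \<Longrightarrow> (\<Sum>h\<in>S4. gr_basis a h * f h) = f a"
proof -
  assume a: "a \<in> S4"
  have "(\<Sum>h\<in>S4. gr_basis a h * f h) = (\<Sum>h\<in>S4. if h = a then f h else 0)"
    by (rule sum.cong) (auto simp: gr_basis_def)
  also have "\<dots> = f a" using a finite_S4 by simp
  finally show ?thesis .
qed

lemma gr_mult_basis:
  assumes a: "a \<in> S4" and b: "b \<in> S4"
  shows "gr_mult (gr_basis a) (gr_basis b) = gr_basis (a \<circ> b)"
proof
  fix g
  have "(\<Sum>h\<in>S4. gr_basis a h * gr_basis b (inv h \<circ> g)) = gr_basis b (inv a \<circ> g)"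
    using a by (rule sum_S4_basis)
  moreover have "(inv a \<circ> g = b) \<longleftrightarrow> (g = a \<circ> b)"
    using S4_inv_cancel[OF a] by metis
  ultimately show "gr_mult (gr_basis a) (gr_basis b) g = gr_basis (a \<circ> b) g"
    using S4_compose[OF a b] by (auto simp: gr_mult_def gr_basis_def)
qed

text \<open>Associativity of the convolution, by reindexing the inner sum with h = k o m.\<close>

lemma gr_mult_assoc: "gr_mult (gr_mult x y) z = gr_mult x (gr_mult y z)"
proof
  fix g
  show "gr_mult (gr_mult x y) z g = gr_mult x (gr_mult y z) g"
  proof (cases "g \<in> S4")
    case True
    have reindex: "(\<Sum>m\<in>S4. y m * z (inv m \<circ> (inv k \<circ> g)))
        = (\<Sum>h\<in>S4. y (inv k \<circ> h) * z (inv h \<circ> g))" if k: "k \<in> S4" for k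
    proof -
      have "(\<Sum>m\<in>S4. y m * z (inv m \<circ> (inv k \<circ> g)))
          = (\<Sum>h\<in>S4. y (inv k \<circ> h) * z (inv (inv k \<circ> h) \<circ> (inv k \<circ> g)))"
        by (rule sum.reindex_bij_witness[where j="\<lambda>m. k \<circ> m" and i="\<lambda>h. inv k \<circ> h"])
          (auto simp: S4_inv_cancel k S4_compose S4_inv)
      also have "\<dots> = (\<Sum>h\<in>S4. y (inv k \<circ> h) * z (inv h \<circ> g))"
      proof (rule sum.cong[OF refl])
        fix h assume h: "h \<in> S4"
        have "bij k" "bij h" using k h S4_permutes permutes_bij by blast+
        then have "inv (inv k \<circ> h) = inv h \<circ> k"
          by (simp add: o_inv_distrib bij_imp_bij_inv inv_inv_eq)
        then show "y (inv k \<circ> h) * z (inv (inv k \<circ> h) \<circ> (inv k \<circ> g)) = y (inv k \<circ> h) * z (inv h \<circ> g)"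
          using S4_inv_cancel(2)[OF k, of g] by (simp add: o_assoc[symmetric])
      qed
      finally show ?thesis .
    qed
    have "gr_mult (gr_mult x y) z g
        = (\<Sum>k\<in>S4. \<Sum>h\<in>S4. x k * y (inv k \<circ> h) * z (inv h \<circ> g))"
      using True by (simp add: gr_mult_def sum_distrib_right) (rule sum.swap)
    also have "\<dots> = (\<Sum>k\<in>S4. x k * (\<Sum>m\<in>S4. y m * z (inv m \<circ> (inv k \<circ> g))))"
      by (simp add: reindex sum_distrib_left mult.assoc)
    also have "\<dots> = gr_mult x (gr_mult y z) g"
      using True by (simp add: gr_mult_def S4_compose S4_inv)
    finally show ?thesis .
  qed (simp add: gr_mult_def)
qed

lemma gr_mult_one_left:
  assumes "\<And>g. g \<notin> S4 \<Longrightarrow> y g = 0" shows "gr_mult gr_one y = y"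
proof
  fix g
  have "(\<Sum>h\<in>S4. gr_basis id h * y (inv h \<circ> g)) = y g"
    using sum_S4_basis[OF S4_id] by simp
  then show "gr_mult gr_one y g = y g"
    using assms by (auto simp: gr_mult_def gr_one_def)
qed


text \<open>An element of Z S_4 can be written as a list of (coefficient, word) pairs.  On such
  lists, multiplication and equality are computable, which lets us certify concrete identities
  in the group ring by evaluation.\<close>

type_synonym terms = "(int \<times> nat list) list"

primrec gr_of_terms :: "terms \<Rightarrow> zs4" where
  "gr_of_terms [] = gr_zero"
| "gr_of_terms (x # l) = gr_add (gr_smult (fst x) (gr_basis (perm_of_word (snd x)))) (gr_of_terms l)"

definition terms_mult :: "terms \<Rightarrow> terms \<Rightarrow> terms" where
  "terms_mult l1 l2 = concat (map (\<lambda>(c, v). map (\<lambda>(d, w). (c * d, compose_words v w)) l2) l1)"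

definition terms_smult :: "int \<Rightarrow> terms \<Rightarrow> terms" where
  "terms_smult c l = map (\<lambda>(d, w). (c * d, w)) l"

definition terms_coeff :: "terms \<Rightarrow> nat list \<Rightarrow> int" where
  "terms_coeff l w = sum_list (map (\<lambda>(c, v). if v = w then c else 0) l)"

definition terms_ok :: "terms \<Rightarrow> bool" where
  "terms_ok l \<longleftrightarrow> list_all (\<lambda>(c, w). w \<in> set S4_words) l"

definition terms_eq :: "terms \<Rightarrow> terms \<Rightarrow> bool" where
  "terms_eq l1 l2 \<longleftrightarrow> terms_ok l1 \<and> terms_ok l2 \<and>
     list_all (\<lambda>w. terms_coeff l1 w = terms_coeff l2 w) S4_words"

lemma gr_of_terms_append: "gr_of_terms (l1 @ l2) = gr_add (gr_of_terms l1) (gr_of_terms l2)"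
  by (induction l1) (auto simp: gr_add_def gr_zero_def)

lemma gr_of_terms_concat: "gr_of_terms (concat ls) g = (\<Sum>l\<leftarrow>ls. gr_of_terms l g)"
  by (induction ls) (auto simp: gr_of_terms_append gr_add_def gr_zero_def)

lemma gr_of_terms_smult: "gr_of_terms (terms_smult c l) = gr_smult c (gr_of_terms l)"
  by (induction l) (auto simp: terms_smult_def gr_add_def gr_zero_def gr_smult_def algebra_simps)

lemma gr_of_terms_outside: "terms_ok l \<Longrightarrow> g \<notin> S4 \<Longrightarrow> gr_of_terms l g = 0"
  by (induction l)
    (auto simp: terms_ok_def gr_add_def gr_zero_def gr_smult_def gr_basis_def S4_eq_words)

lemma gr_of_terms_at:
  "terms_ok l \<Longrightarrow> w \<in> set S4_words \<Longrightarrow> gr_of_terms l (perm_of_word w) = terms_coeff l w"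
  by (induction l) (auto simp: terms_ok_def terms_coeff_def gr_add_def gr_zero_def
      gr_smult_def gr_basis_def dest: perm_of_word_inj)

lemma terms_eq_sound: "terms_eq l1 l2 \<Longrightarrow> gr_of_terms l1 = gr_of_terms l2"
proof
  fix g assume eq: "terms_eq l1 l2"
  show "gr_of_terms l1 g = gr_of_terms l2 g"
  proof (cases "g \<in> S4")
    case True
    then obtain w where "w \<in> set S4_words" "g = perm_of_word w" by (auto simp: S4_eq_words)
    then show ?thesis using eq gr_of_terms_at by (auto simp: terms_eq_def list_all_iff)
  qed (use eq gr_of_terms_outside in \<open>auto simp: terms_eq_def\<close>)
qed

lemma gr_of_terms_mult:
  assumes "terms_ok l1" "terms_ok l2"
  shows "gr_mult (gr_of_terms l1) (gr_of_terms l2) = gr_of_terms (terms_mult l1 l2)"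
  using assms
proof (induction l1)
  case Nil then show ?case by (simp add: gr_mult_zero terms_mult_def)
next
  case (Cons x l)
  obtain c v where x: "x = (c, v)" by (cases x)
  have v: "v \<in> set S4_words" and ok: "terms_ok l" using Cons.prems x by (auto simp: terms_ok_def)
  have basis_mult: "gr_mult (gr_basis (perm_of_word v)) (gr_of_terms l2)
      = gr_of_terms (map (\<lambda>(d, w). (d, compose_words v w)) l2)"
    using Cons.prems(2)
    by (induction l2) (auto simp: terms_ok_def gr_mult_zero gr_mult_add_right gr_mult_smult_right
        gr_mult_basis S4_eq_words v perm_of_word_compose)
  have "terms_mult ((c, v) # l) l2
      = terms_smult c (map (\<lambda>(d, w). (d, compose_words v w)) l2) @ terms_mult l l2"
    by (simp add: terms_mult_def terms_smult_def comp_def case_prod_beta)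
  then show ?case using Cons.IH[OF ok Cons.prems(2)] x basis_mult
    by (simp add: gr_of_terms_append gr_of_terms_smult gr_mult_add_left gr_mult_smult_left)
qed

lemma gr_sum_basis_words:
  assumes "distinct ws" "set ws \<subseteq> set S4_words"
  shows "gr_sum gr_basis (perm_of_word ` set ws) = gr_of_terms (map (\<lambda>w. (1, w)) ws)"
proof
  fix g
  have inj: "inj_on perm_of_word (set ws)" using assms(2) perm_of_word_inj by (meson inj_onI subsetD)
  have "gr_of_terms (map (\<lambda>w. (1, w)) ws) g = (\<Sum>w\<leftarrow>ws. gr_basis (perm_of_word w) g)"
    by (induction ws) (auto simp: gr_add_def gr_zero_def gr_smult_def)
  also have "\<dots> = (\<Sum>w\<in>set ws. gr_basis (perm_of_word w) g)"
    using assms(1) by (simp add: sum_list_distinct_conv_sum_set)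
  finally show "gr_sum gr_basis (perm_of_word ` set ws) g = gr_of_terms (map (\<lambda>w. (1, w)) ws) g"
    by (simp add: gr_sum_def sum.reindex[OF inj])
qed


section \<open>Certified identities in Z S_4\<close>

definition perm_terms :: "(nat \<Rightarrow> nat) list \<Rightarrow> terms" where
  "perm_terms ps = map (\<lambda>w. (1, w)) (remdups (map word_of_perm ps))"

lemma gr_of_perm_terms:
  assumes "\<forall>p\<in>set ps. p permutes {1..4}"
  shows "gr_of_terms (perm_terms ps) = gr_sum gr_basis (set ps)"
proof -
  have "set ps = perm_of_word ` set (remdups (map word_of_perm ps))"
    using assms perm_of_word_of_perm by force
  then have "gr_sum gr_basis (set ps) = gr_sum gr_basis (perm_of_word ` set (remdups (map word_of_perm ps)))"
    by simp
  also have "\<dots> = gr_of_terms (perm_terms ps)"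
    unfolding perm_terms_def
    by (rule gr_sum_basis_words) (use assms word_of_perm_in_S4_words in auto)
  finally show ?thesis by simp
qed

text \<open>All transpositions of {1..4} (each listed twice) and all 4-cycles (each listed four
  times, once per rotation of its cycle word).\<close>

definition transpositions :: "(nat \<Rightarrow> nat) list" where
  "transpositions = [transpose a b. a \<leftarrow> [1,2,3,4], b \<leftarrow> [1,2,3,4], a \<noteq> b]"

definition four_cycles :: "(nat \<Rightarrow> nat) list" where
  "four_cycles = map cycle_of_list S4_words"

lemma C1_eq_terms: "C1 = gr_of_terms (perm_terms transpositions)"
proof -
  have "set transpositions
      = (\<lambda>(a, b). transpose a b) ` {(a, b). a \<in> {1..4::nat} \<and> b \<in> {1..4} \<and> a \<noteq> b}"
  proof -
    have "{1..4::nat} = set [1,2,3,4]" by auto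
    then show ?thesis unfolding transpositions_def by (auto simp: image_iff)
  qed
  then have "{transpose a b |a b. a \<in> {1..4::nat} \<and> b \<in> {1..4} \<and> a \<noteq> b} = set transpositions"
    by auto
  moreover have "\<forall>p\<in>set transpositions. p permutes {1..4}"
    by (auto simp: transpositions_def permutes_swap_id)
  ultimately show ?thesis by (simp add: C1_def gr_of_perm_terms)
qed

lemma C3_eq_terms: "C3 = gr_of_terms (perm_terms four_cycles)"
proof -
  have "{cycle_of_list cs |cs. distinct cs \<and> set cs = {1..4::nat}} = set four_cycles"
    by (auto simp: four_cycles_def set_S4_words)
  moreover have "\<forall>p\<in>set four_cycles. p permutes {1..4}"
  proof
    fix p assume "p \<in> set four_cycles"
    then obtain w where "p = cycle_of_list w" "set w = {1..4}"
      by (auto simp: four_cycles_def set_S4_words)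
    then show "p permutes {1..4}" using cycle_permutes[of w] by simp
  qed
  ultimately show ?thesis by (simp add: C3_def gr_of_perm_terms)
qed

definition JM_terms :: "nat \<Rightarrow> terms" where
  "JM_terms k = map (\<lambda>j. (1, word_of_perm (transpose j k))) [1..<k]"

lemma JM_eq_terms:
  assumes "k \<in> {1..4}" shows "JM k = gr_of_terms (JM_terms k)"
proof
  fix g
  have "gr_of_terms (map (\<lambda>j. (1, word_of_perm (transpose j k))) js) g
      = (\<Sum>j\<leftarrow>js. gr_basis (perm_of_word (word_of_perm (transpose j k))) g)" for js
    by (induction js) (auto simp: gr_add_def gr_zero_def gr_smult_def)
  then have "gr_of_terms (JM_terms k) g
      = (\<Sum>j\<leftarrow>[1..<k]. gr_basis (perm_of_word (word_of_perm (transpose j k))) g)"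
    by (simp add: JM_terms_def)
  also have "\<dots> = (\<Sum>j\<in>{1..<k}. gr_basis (transpose j k) g)"
  proof -
    have "perm_of_word (word_of_perm (transpose j k)) = transpose j k" if "j \<in> {1..<k}" for j
      using that assms by (intro perm_of_word_of_perm permutes_swap_id) auto
    then show ?thesis by (simp add: sum_set_upt_conv_sum_list_nat[symmetric])
  qed
  finally show "JM k g = gr_of_terms (JM_terms k) g" by (simp add: JM_def gr_sum_def)
qed

text \<open>Ten integral simultaneous eigenvectors of L_1,...,L_4, one for each standard tableau
  with four boxes.  Row t lists the coefficients of F_t on the words of S4_words (in that
  order); row t of contents lists the contents of the boxes 1,...,4 of the tableau, which are
  the eigenvalues of L_1,...,L_4 on F_t.\<close>

definition eig_table :: "int list list" where
  "eig_table =
    [[1, 1, 1, 1, 1, 1, 1, 1, 1, 1, 1, 1, 1, 1, 1, 1, 1, 1, 1, 1, 1, 1, 1, 1],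
     [3, -1, 3, -1, -1, -1, 3, -1, 3, -1, -1, -1, 3, -1, 3, -1, -1, -1, -1, -1, -1, -1, -1, -1],
     [-6, -2, 3, 1, 1, -5, -6, -2, 3, 1, 1, -5, 3, 1, 3, 1, 4, 4, 1, -5, 1, -5, 4, 4],
     [-2, -2, -1, -1, -1, -1, 2, 2, 1, 1, 1, 1, 1, 1, -1, -1, 0, 0, 1, 1, -1, -1, 0, 0],
     [-2, -2, 1, 1, 1, 1, -2, -2, 1, 1, 1, 1, 1, 1, 1, 1, -2, -2, 1, 1, 1, 1, -2, -2],
     [-2, 2, -1, 1, 1, -1, 2, -2, 1, -1, -1, 1, 1, -1, -1, 1, -2, 2, -1, 1, 1, -1, 2, -2],
     [-2, 2, 1, -1, -1, 1, -2, 2, 1, -1, -1, 1, 1, -1, 1, -1, 0, 0, -1, 1, -1, 1, 0, 0],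
     [-6, 2, -3, 1, 1, 5, 6, -2, 3, -1, -1, -5, 3, -1, -3, 1, 4, -4, -1, -5, 1, 5, -4, 4],
     [3, 1, -3, -1, -1, 1, -3, -1, 3, 1, 1, -1, 3, 1, -3, -1, -1, 1, 1, -1, -1, 1, 1, -1],
     [1, -1, -1, 1, 1, -1, -1, 1, 1, -1, -1, 1, 1, -1, -1, 1, 1, -1, -1, 1, 1, -1, -1, 1]]"

definition contents :: "int list list" where
  "contents = [[0,1,2,3], [0,1,2,-1], [0,1,-1,2], [0,-1,1,2], [0,1,-1,0],
               [0,-1,1,0], [0,1,-1,-2], [0,-1,1,-2], [0,-1,-2,1], [0,-1,-2,-3]]"

definition content :: "nat \<Rightarrow> nat \<Rightarrow> int" where
  "content t k = contents ! t ! (k - 1)"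

definition eig_terms :: "nat \<Rightarrow> terms" where
  "eig_terms t = zip (eig_table ! t) S4_words"

definition comb_terms :: "int list \<Rightarrow> terms" where
  "comb_terms cs = concat (map (\<lambda>t. terms_smult (cs ! t) (eig_terms t)) [0..<10])"

text \<open>Three linear combinations of the eigenvectors: the weights resolving the identity
  (sum w_t F_t = 48), and the combinations giving 4 (C_(1) + C_(3)) and 12 (C_(1) - C_(3)).\<close>

definition weights :: "int list" where
  "weights = [2, 2, -1, -3, -2, -2, -3, -1, 2, 2]"

definition coeffs_sum :: "int list" where
  "coeffs_sum = [2, 0, 0, 0, 0, 0, 0, 0, 0, -2]"

definition coeffs_diff :: "int list" where
  "coeffs_diff = [0, 2, -1, -3, 0, 0, 3, 1, -2, 0]"

lemma cert_eigen:
  "list_all (\<lambda>t. terms_ok (eig_terms t) \<and> list_all (\<lambda>k.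
     terms_eq (terms_mult (JM_terms k) (eig_terms t)) (terms_smult (content t k) (eig_terms t)))
     [1,2,3,4]) [0..<10]"
  by code_simp

lemma cert_resolution: "terms_eq (comb_terms weights) (terms_smult 48 [(1, [1,2,3,4])])"
  by code_simp

lemma cert_sum: "terms_eq (comb_terms coeffs_sum)
    (terms_smult 4 (perm_terms transpositions @ perm_terms four_cycles))"
  by code_simp

lemma cert_diff: "terms_eq (comb_terms coeffs_diff)
    (terms_smult 12 (perm_terms transpositions @ terms_smult (-1) (perm_terms four_cycles)))"
  by code_simp


section \<open>Spectral decomposition of monomials in the Jucys-Murphy elements\<close>

definition eig_vec :: "nat \<Rightarrow> zs4" where
  "eig_vec t = gr_of_terms (eig_terms t)"

definition eig_comb :: "(nat \<Rightarrow> int) \<Rightarrow> zs4" where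
  "eig_comb f = gr_sum (\<lambda>t. gr_smult (f t) (eig_vec t)) {0..<10}"

lemma eig_comb_cong: "(\<And>t. t < 10 \<Longrightarrow> f t = f' t) \<Longrightarrow> eig_comb f = eig_comb f'"
  unfolding eig_comb_def gr_sum_def by (intro ext sum.cong) auto

lemma eig_comb_linear:
  "eig_comb (\<lambda>t. a * f t + b * f' t) = gr_add (gr_smult a (eig_comb f)) (gr_smult b (eig_comb f'))"
  by (rule ext) (simp add: eig_comb_def gr_sum_def gr_add_def gr_smult_def sum.distrib
      sum_distrib_left algebra_simps)

lemma gr_of_comb_terms: "gr_of_terms (comb_terms cs) = eig_comb (\<lambda>t. cs ! t)"
  by (rule ext) (simp add: comb_terms_def gr_of_terms_concat gr_of_terms_smult eig_comb_def
      gr_sum_def gr_smult_def eig_vec_def sum_set_upt_conv_sum_list_nat[symmetric])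

lemma eig_terms_ok: "t < 10 \<Longrightarrow> terms_ok (eig_terms t)"
  using cert_eigen by (simp add: list_all_iff)

lemma JM_terms_ok: "k \<in> {1..4} \<Longrightarrow> terms_ok (JM_terms k)"
  by (auto simp: JM_terms_def terms_ok_def list_all_iff intro!: word_of_perm_in_S4_words
      permutes_swap_id)

lemma JM_eig_vec:
  assumes t: "t < 10" and k: "k \<in> {1..4}"
  shows "gr_mult (JM k) (eig_vec t) = gr_smult (content t k) (eig_vec t)"
proof -
  have "k \<in> {1,2,3,4}" using k by auto
  then have "terms_eq (terms_mult (JM_terms k) (eig_terms t)) (terms_smult (content t k) (eig_terms t))"
    using cert_eigen t by (auto simp: list_all_iff)
  then show ?thesis
    using JM_eq_terms[OF k] gr_of_terms_mult[OF JM_terms_ok[OF k] eig_terms_ok[OF t]]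
    by (simp add: eig_vec_def terms_eq_sound gr_of_terms_smult)
qed

lemma JM_pow_eig_vec:
  assumes t: "t < 10" and k: "k \<in> {1..4}"
  shows "gr_mult (gr_pow (JM k) n) (eig_vec t) = gr_smult (content t k ^ n) (eig_vec t)"
proof (induction n)
  case 0
  have "gr_mult gr_one (eig_vec t) = eig_vec t"
    using gr_of_terms_outside[OF eig_terms_ok[OF t]] by (intro gr_mult_one_left) (simp add: eig_vec_def)
  then show ?case by (simp add: gr_smult_def)
next
  case (Suc n)
  then show ?case
    by (simp add: gr_mult_assoc gr_mult_smult_right JM_eig_vec[OF t k] gr_smult_smult mult.commute)
qed

lemma JM_pow_eig_comb:
  assumes "k \<in> {1..4}"
  shows "gr_mult (gr_pow (JM k) n) (eig_comb f) = eig_comb (\<lambda>t. f t * content t k ^ n)"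
proof -
  have "gr_mult (gr_pow (JM k) n) (eig_comb f)
      = gr_sum (\<lambda>t. gr_mult (gr_pow (JM k) n) (gr_smult (f t) (eig_vec t))) {0..<10}"
    by (simp add: eig_comb_def gr_mult_sum_right)
  also have "\<dots> = eig_comb (\<lambda>t. f t * content t k ^ n)"
    unfolding eig_comb_def gr_sum_def
    by (intro ext sum.cong) (simp_all add: gr_mult_smult_right JM_pow_eig_vec[OF _ assms] gr_smult_smult)
  finally show ?thesis .
qed

lemma resolution: "gr_smult 48 gr_one = eig_comb (\<lambda>t. weights ! t)"
proof -
  have "perm_of_word [1,2,3,4] = id"
    using perm_of_word_of_perm[OF permutes_id] by (simp add: word_of_perm_def)
  then have "gr_of_terms [(1, [1,2,3,4])] = gr_one"
    by (auto simp: gr_one_def gr_add_def gr_smult_def gr_zero_def gr_basis_def)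
  then show ?thesis
    using terms_eq_sound[OF cert_resolution] by (simp add: gr_of_comb_terms gr_of_terms_smult)
qed

definition content_monomial :: "nat list \<Rightarrow> nat \<Rightarrow> int" where
  "content_monomial \<alpha> t = content t 1 ^ (\<alpha> ! 0) * content t 2 ^ (\<alpha> ! 1) *
     content t 3 ^ (\<alpha> ! 2) * content t 4 ^ (\<alpha> ! 3)"

text \<open>Applying L_1^a_1 ... L_4^a_4 to the resolution of 48 gives its spectral expansion.\<close>

lemma JM_monomial:
  "gr_smult 48 (gr_prod_list (map (\<lambda>i. gr_pow (JM (i + 1)) (\<alpha> ! i)) [0..<4]))
     = eig_comb (\<lambda>t. weights ! t * content_monomial \<alpha> t)"
proof -
  have "map (\<lambda>i. gr_pow (JM (i + 1)) (\<alpha> ! i)) [0..<4]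
      = [gr_pow (JM 1) (\<alpha> ! 0), gr_pow (JM 2) (\<alpha> ! 1), gr_pow (JM 3) (\<alpha> ! 2), gr_pow (JM 4) (\<alpha> ! 3)]"
    by (simp add: upt_rec numeral_eq_Suc)
  then have "gr_smult 48 (gr_prod_list (map (\<lambda>i. gr_pow (JM (i + 1)) (\<alpha> ! i)) [0..<4]))
      = gr_mult (gr_pow (JM 1) (\<alpha> ! 0)) (gr_mult (gr_pow (JM 2) (\<alpha> ! 1))
          (gr_mult (gr_pow (JM 3) (\<alpha> ! 2)) (gr_mult (gr_pow (JM 4) (\<alpha> ! 3)) (gr_smult 48 gr_one))))"
    by (simp add: gr_prod_list_def gr_mult_smult_right)
  also have "\<dots> = eig_comb (\<lambda>t. weights ! t * content_monomial \<alpha> t)"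
    by (simp add: resolution JM_pow_eig_comb content_monomial_def mult_ac)
  finally show ?thesis .
qed

definition exponents :: "nat list \<Rightarrow> nat list set" where
  "exponents mu = {\<alpha>. length \<alpha> = 4 \<and> length mu \<le> 4 \<and>
     mset \<alpha> = mset (mu @ replicate (4 - length mu) 0)}"

lemma finite_exponents: "finite (exponents mu)"
proof -
  have "exponents mu \<subseteq> {xs. set xs \<subseteq> set (mu @ replicate (4 - length mu) 0) \<and> length xs = 4}"
    unfolding exponents_def using mset_eq_setD by blast
  then show ?thesis by (rule finite_subset) (simp add: finite_lists_length_eq)
qed

lemma m_JM_spectral:
  "gr_smult 48 (m_JM mu) = eig_comb (\<lambda>t. weights ! t * (\<Sum>\<alpha>\<in>exponents mu. content_monomial \<alpha> t))"
proof
  fix g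
  have "gr_smult 48 (m_JM mu) g = (\<Sum>\<alpha>\<in>exponents mu. gr_smult 48
      (gr_prod_list (map (\<lambda>i. gr_pow (JM (i + 1)) (\<alpha> ! i)) [0..<4])) g)"
    by (simp add: m_JM_def exponents_def gr_sum_def gr_smult_def sum_distrib_left)
  also have "\<dots> = (\<Sum>\<alpha>\<in>exponents mu. \<Sum>t\<in>{0..<10}. weights ! t * content_monomial \<alpha> t * eig_vec t g)"
    by (simp only: JM_monomial) (simp add: eig_comb_def gr_sum_def gr_smult_def)
  also have "\<dots> = eig_comb (\<lambda>t. weights ! t * (\<Sum>\<alpha>\<in>exponents mu. content_monomial \<alpha> t)) g"
    by (subst sum.swap) (simp add: eig_comb_def gr_sum_def gr_smult_def sum_distrib_left
        sum_distrib_right mult_ac)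
  finally show "gr_smult 48 (m_JM mu) g = eig_comb (\<lambda>t. weights ! t * (\<Sum>\<alpha>\<in>exponents mu. content_monomial \<alpha> t)) g" .
qed

lemma eig_comb_class_sums:
  "eig_comb (\<lambda>t. coeffs_sum ! t) = gr_smult 4 (gr_add C1 C3)"
  "eig_comb (\<lambda>t. coeffs_diff ! t) = gr_smult 12 (gr_add C1 (gr_smult (-1) C3))"
  using terms_eq_sound[OF cert_sum] terms_eq_sound[OF cert_diff]
  by (simp_all add: gr_of_comb_terms gr_of_terms_smult gr_of_terms_append C1_eq_terms C3_eq_terms)


text \<open>Since L_1 = 0, only exponent vectors with first entry 0 contribute, so m_mu(L) is
  governed by the monomial symmetric polynomial of mu (padded to three parts) in three
  variables.\<close>

definition arrangements3 :: "nat list \<Rightarrow> nat list set" where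
  "arrangements3 r = {\<beta>. length \<beta> = 3 \<and> mset \<beta> = mset r}"

definition msym3 :: "nat list \<Rightarrow> int \<Rightarrow> int \<Rightarrow> int \<Rightarrow> int" where
  "msym3 r x y z = (\<Sum>\<beta>\<in>arrangements3 r. x ^ (\<beta> ! 0) * y ^ (\<beta> ! 1) * z ^ (\<beta> ! 2))"

definition pad3 :: "nat list \<Rightarrow> nat list" where
  "pad3 mu = mu @ replicate (3 - length mu) 0"

lemma length3_cases: "length \<beta> = 3 \<Longrightarrow> \<exists>a b c. \<beta> = [a, b, c]"
  by (auto simp: numeral_3_eq_3 length_Suc_conv)

lemma arrangements3_eq:
  "arrangements3 [a, b, c] = {[a,b,c], [a,c,b], [b,a,c], [b,c,a], [c,a,b], [c,b,a]}"
proof (intro equalityI subsetI)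
  fix \<beta> assume \<beta>: "\<beta> \<in> arrangements3 [a, b, c]"
  then obtain x y z where "\<beta> = [x, y, z]" by (auto simp: arrangements3_def dest!: length3_cases)
  then show "\<beta> \<in> {[a,b,c], [a,c,b], [b,a,c], [b,c,a], [c,a,b], [c,b,a]}"
    using \<beta> by (auto simp: arrangements3_def add_eq_conv_ex)
qed (auto simp: arrangements3_def add_mset_commute)

lemma msym3_swap12: "msym3 r x y z = msym3 r y x z"
proof -
  let ?sw = "\<lambda>\<beta>::nat list. [\<beta> ! 1, \<beta> ! 0, \<beta> ! 2]"
  have "\<And>\<beta>. \<beta> \<in> arrangements3 r \<Longrightarrow> ?sw \<beta> \<in> arrangements3 r \<and> ?sw (?sw \<beta>) = \<beta>"
    by (auto simp: arrangements3_def add_mset_commute dest!: length3_cases)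
  then show ?thesis unfolding msym3_def
    by (intro sum.reindex_bij_witness[where i="?sw" and j="?sw"]) (simp_all add: mult.commute)
qed

lemma msym3_swap23: "msym3 r x y z = msym3 r x z y"
proof -
  let ?sw = "\<lambda>\<beta>::nat list. [\<beta> ! 0, \<beta> ! 2, \<beta> ! 1]"
  have "\<And>\<beta>. \<beta> \<in> arrangements3 r \<Longrightarrow> ?sw \<beta> \<in> arrangements3 r \<and> ?sw (?sw \<beta>) = \<beta>"
    by (auto simp: arrangements3_def add_mset_commute dest!: length3_cases)
  then show ?thesis unfolding msym3_def
    by (intro sum.reindex_bij_witness[where i="?sw" and j="?sw"]) (simp_all add: mult_ac)
qed

lemma msym3_neg: "msym3 r (- x) (- y) (- z) = (- 1) ^ sum_list r * msym3 r x y z"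
  unfolding msym3_def sum_distrib_left
proof (rule sum.cong[OF refl])
  fix \<beta> assume "\<beta> \<in> arrangements3 r"
  then obtain a b c where \<beta>: "\<beta> = [a, b, c]" and "mset \<beta> = mset r"
    by (auto simp: arrangements3_def dest!: length3_cases)
  then have "sum_list r = a + b + c" by (metis sum_mset_sum_list sum_list_simps add.assoc add_0_right)
  then show "(- x) ^ (\<beta> ! 0) * (- y) ^ (\<beta> ! 1) * (- z) ^ (\<beta> ! 2)
      = (- 1) ^ sum_list r * (x ^ (\<beta> ! 0) * y ^ (\<beta> ! 1) * z ^ (\<beta> ! 2))"
    unfolding \<beta> by (simp add: power_minus[of x] power_minus[of y] power_minus[of z] power_add mult_ac)
qed

text \<open>Since L_1 = 0 (content 0 of box 1), m_mu evaluated at a content vector reduces to m_mu in the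
  contents of boxes 2, 3, 4.\<close>

lemma content_sum_eq_msym3:
  assumes len: "length mu \<le> 3" and t: "t < 10"
  shows "(\<Sum>\<alpha>\<in>exponents mu. content_monomial \<alpha> t)
      = msym3 (pad3 mu) (content t 2) (content t 3) (content t 4)"
proof -
  have zero_first: "(0 # \<beta> \<in> exponents mu) = (\<beta> \<in> arrangements3 (pad3 mu))" for \<beta>
  proof -
    have "4 - length mu = Suc (3 - length mu)" using len by simp
    then show ?thesis unfolding exponents_def arrangements3_def pad3_def using len by simp
  qed
  have "\<forall>r\<in>set contents. r ! 0 = 0" "length contents = 10" by (simp_all add: contents_def)
  then have "content t 1 = 0" using t nth_mem[of t contents] by (simp add: content_def)
  then have vanish: "content_monomial \<alpha> t = 0"
    if "\<alpha> \<in> exponents mu - Cons 0 ` arrangements3 (pad3 mu)" for \<alpha>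
    using that zero_first by (cases \<alpha>) (auto simp: exponents_def content_monomial_def)
  have "(\<Sum>\<alpha>\<in>exponents mu. content_monomial \<alpha> t)
      = (\<Sum>\<alpha>\<in>Cons 0 ` arrangements3 (pad3 mu). content_monomial \<alpha> t)"
    using zero_first vanish by (intro sum.mono_neutral_right finite_exponents) auto
  also have "\<dots> = (\<Sum>\<beta>\<in>arrangements3 (pad3 mu). content_monomial (0 # \<beta>) t)"
    by (subst sum.reindex) (auto simp: inj_on_def)
  finally show ?thesis by (simp add: msym3_def content_monomial_def)
qed


section \<open>Odd monomials as combinations of class sums\<close>

definition pval :: "nat list \<Rightarrow> int" where
  "pval mu = msym3 (pad3 mu) 1 2 3"

definition qval :: "nat list \<Rightarrow> int" where
  "qval mu = msym3 (pad3 mu) 1 2 (-1)"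

text \<open>For odd degree, symmetry and homogeneity reduce the values of m_mu at the ten content
  vectors to +-p, +-q and 0; weighted by w_t they form the combination p a + q b of the
  coefficient vectors a, b of 4 (C_(1) + C_(3)) and 12 (C_(1) - C_(3)).\<close>

lemma weighted_content_values:
  assumes odd: "odd (sum_list mu)" and t: "t < 10"
  shows "weights ! t * msym3 (pad3 mu) (content t 2) (content t 3) (content t 4)
      = pval mu * coeffs_sum ! t + qval mu * coeffs_diff ! t"
proof -
  let ?m = "msym3 (pad3 mu)"
  have sign: "(- 1 :: int) ^ sum_list (pad3 mu) = - 1" using odd by (simp add: pad3_def sum_list_replicate)
  have "?m 1 (-1) 2 = qval mu" "?m (-1) 1 2 = qval mu"
    using msym3_swap23 msym3_swap12 by (metis qval_def)+
  moreover have "?m 1 (-1) 0 = 0" "?m (-1) 1 0 = 0"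
    using msym3_neg[of "pad3 mu" 1 "-1" 0] msym3_swap12[of "pad3 mu" 1 "-1" 0] sign by simp_all
  moreover have "?m 1 (-1) (-2) = - qval mu" "?m (-1) 1 (-2) = - qval mu"
    "?m (-1) (-2) 1 = - qval mu" "?m (-1) (-2) (-3) = - pval mu"
    using msym3_neg[of "pad3 mu" "-1" 1 2] msym3_neg[of "pad3 mu" 1 "-1" 2]
      msym3_neg[of "pad3 mu" 1 2 "-1"] msym3_neg[of "pad3 mu" 1 2 3] sign calculation(1,2)
    by (simp_all add: pval_def qval_def)
  moreover have "t = 0 \<or> t = 1 \<or> t = 2 \<or> t = 3 \<or> t = 4 \<or> t = 5 \<or> t = 6 \<or> t = 7 \<or> t = 8 \<or> t = 9"
    using t by presburger
  ultimately show ?thesis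
    by (elim disjE) (simp_all add: content_def contents_def weights_def coeffs_sum_def
        coeffs_diff_def pval_def qval_def)
qed

lemma m_JM_class_sums:
  assumes len: "length mu \<le> 3" and odd: "odd (sum_list mu)"
  shows "12 * m_JM mu g = (pval mu + 3 * qval mu) * C1 g + (pval mu - 3 * qval mu) * C3 g"
proof -
  have "gr_smult 48 (m_JM mu) = eig_comb (\<lambda>t. pval mu * coeffs_sum ! t + qval mu * coeffs_diff ! t)"
    unfolding m_JM_spectral
    by (rule eig_comb_cong) (simp add: content_sum_eq_msym3[OF len] weighted_content_values[OF odd])
  also have "\<dots> = gr_add (gr_smult (pval mu) (gr_smult 4 (gr_add C1 C3)))
      (gr_smult (qval mu) (gr_smult 12 (gr_add C1 (gr_smult (-1) C3))))"
    by (simp add: eig_comb_linear eig_comb_class_sums)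
  finally have "48 * m_JM mu g = pval mu * (4 * (C1 g + C3 g)) + qval mu * (12 * (C1 g - C3 g))"
    by (simp add: fun_eq_iff gr_smult_def gr_add_def)
  then show ?thesis by (simp add: algebra_simps)
qed

lemma class_sums_at:
  "C1 (perm_of_word [2,1,3,4]) = 1" "C3 (perm_of_word [2,1,3,4]) = 0"
  "C1 (perm_of_word [2,3,4,1]) = 0" "C3 (perm_of_word [2,3,4,1]) = 1"
proof -
  have ok: "terms_ok (perm_terms transpositions)" "terms_ok (perm_terms four_cycles)"
    by (code_simp, code_simp)
  have words: "[2,1,3,4] \<in> set S4_words" "[2,3,4,1] \<in> set S4_words"
    by (simp_all add: S4_words_def)
  have "terms_coeff (perm_terms transpositions) [2,1,3,4] = 1"
    "terms_coeff (perm_terms four_cycles) [2,1,3,4] = 0"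
    "terms_coeff (perm_terms transpositions) [2,3,4,1] = 0"
    "terms_coeff (perm_terms four_cycles) [2,3,4,1] = 1"
    by code_simp+
  then show "C1 (perm_of_word [2,1,3,4]) = 1" "C3 (perm_of_word [2,1,3,4]) = 0"
    "C1 (perm_of_word [2,3,4,1]) = 0" "C3 (perm_of_word [2,3,4,1]) = 1"
    unfolding C1_eq_terms C3_eq_terms gr_of_terms_at[OF ok(1) words(1)]
      gr_of_terms_at[OF ok(2) words(1)] gr_of_terms_at[OF ok(1) words(2)]
      gr_of_terms_at[OF ok(2) words(2)] .
qed

text \<open>The coordinates of m_mu(L) with respect to C_(1) and C_(3).\<close>

definition coeff_C1 :: "nat list \<Rightarrow> int" where
  "coeff_C1 mu = m_JM mu (perm_of_word [2,1,3,4])"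

definition coeff_C3 :: "nat list \<Rightarrow> int" where
  "coeff_C3 mu = m_JM mu (perm_of_word [2,3,4,1])"

lemma m_JM_decomposition:
  assumes len: "length mu \<le> 3" and odd: "odd (sum_list mu)"
  shows "12 * coeff_C1 mu = pval mu + 3 * qval mu"
    and "12 * coeff_C3 mu = pval mu - 3 * qval mu"
    and "m_JM mu = gr_add (gr_smult (coeff_C1 mu) C1) (gr_smult (coeff_C3 mu) C3)"
proof -
  show A: "12 * coeff_C1 mu = pval mu + 3 * qval mu"
    using m_JM_class_sums[OF len odd, of "perm_of_word [2,1,3,4]"] class_sums_at
    by (simp add: coeff_C1_def)
  show B: "12 * coeff_C3 mu = pval mu - 3 * qval mu"
    using m_JM_class_sums[OF len odd, of "perm_of_word [2,3,4,1]"] class_sums_at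
    by (simp add: coeff_C3_def)
  show "m_JM mu = gr_add (gr_smult (coeff_C1 mu) C1) (gr_smult (coeff_C3 mu) C3)"
  proof
    fix g
    have "12 * m_JM mu g = 12 * (coeff_C1 mu * C1 g + coeff_C3 mu * C3 g)"
      using m_JM_class_sums[OF len odd, of g] unfolding A[symmetric] B[symmetric]
      by (simp add: algebra_simps)
    then show "m_JM mu g = gr_add (gr_smult (coeff_C1 mu) C1) (gr_smult (coeff_C3 mu) C3) g"
      by (simp add: gr_add_def gr_smult_def)
  qed
qed


lemma Zspan2_memI: "gr_add (gr_smult a x) (gr_smult b y) \<in> Zspan2 x y"
  unfolding Zspan2_def by blast

lemma Zspan2_class_sums_iff:
  fixes a1 b1 a2 b2 :: int
  defines "X \<equiv> gr_add (gr_smult a1 C1) (gr_smult b1 C3)"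
    and "Y \<equiv> gr_add (gr_smult a2 C1) (gr_smult b2 C3)"
  shows "Zspan2 X Y = Zspan2 C1 C3 \<longleftrightarrow> \<bar>a1 * b2 - a2 * b1\<bar> = 1"
proof
  have comb: "gr_add (gr_smult s X) (gr_smult t Y) = gr_add (gr_smult (s * a1 + t * a2) C1)
      (gr_smult (s * b1 + t * b2) C3)" for s t
    by (auto simp: X_def Y_def gr_add_def gr_smult_def algebra_simps)
  have coords: "a = c \<and> b = d"
    if "gr_add (gr_smult a C1) (gr_smult b C3) = gr_add (gr_smult c C1) (gr_smult d C3)" for a b c d
    using fun_cong[OF that, of "perm_of_word [2,1,3,4]"] fun_cong[OF that, of "perm_of_word [2,3,4,1]"]
      class_sums_at by (simp add: gr_add_def gr_smult_def)
  {
    assume eq: "Zspan2 X Y = Zspan2 C1 C3"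
    have "gr_add (gr_smult 1 C1) (gr_smult 0 C3) \<in> Zspan2 X Y"
      "gr_add (gr_smult 0 C1) (gr_smult 1 C3) \<in> Zspan2 X Y"
      unfolding eq by (rule Zspan2_memI)+
    then obtain s t s' t' where
      "gr_add (gr_smult 1 C1) (gr_smult 0 C3) = gr_add (gr_smult s X) (gr_smult t Y)"
      "gr_add (gr_smult 0 C1) (gr_smult 1 C3) = gr_add (gr_smult s' X) (gr_smult t' Y)"
      unfolding Zspan2_def by blast
    then have "s * a1 + t * a2 = 1" "s * b1 + t * b2 = 0" "s' * a1 + t' * a2 = 0" "s' * b1 + t' * b2 = 1"
      unfolding comb by (metis coords)+
    moreover have "(a1 * b2 - a2 * b1) * (s * t' - s' * t)
        = (s * a1 + t * a2) * (s' * b1 + t' * b2) - (s' * a1 + t' * a2) * (s * b1 + t * b2)"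
      by (simp add: algebra_simps)
    ultimately have "(a1 * b2 - a2 * b1) * (s * t' - s' * t) = 1" by simp
    then show "\<bar>a1 * b2 - a2 * b1\<bar> = 1" by (auto simp: zmult_eq_1_iff)
  }
  {
    assume det: "\<bar>a1 * b2 - a2 * b1\<bar> = 1"
    define d where "d = a1 * b2 - a2 * b1"
    have "d = 1 \<or> d = -1" using det unfolding d_def by linarith
    then have dd: "d * d = 1" by auto
    show "Zspan2 X Y = Zspan2 C1 C3"
    proof (intro equalityI subsetI)
      fix h assume "h \<in> Zspan2 X Y"
      then show "h \<in> Zspan2 C1 C3" unfolding Zspan2_def comb by blast
    next
      fix h assume "h \<in> Zspan2 C1 C3"
      then obtain a b where h: "h = gr_add (gr_smult a C1) (gr_smult b C3)" unfolding Zspan2_def by auto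
      define s where "s = d * (a * b2 - b * a2)"
      define t where "t = d * (b * a1 - a * b1)"
      have "s * a1 + t * a2 = (d * d) * a" "s * b1 + t * b2 = (d * d) * b"
        by (simp_all add: s_def t_def d_def algebra_simps)
      then have "h = gr_add (gr_smult s X) (gr_smult t Y)" using h dd by (simp add: comb)
      then show "h \<in> Zspan2 X Y" unfolding Zspan2_def by blast
    qed
  }
qed

definition disc :: "nat list \<Rightarrow> nat list \<Rightarrow> int" where
  "disc mu nu = qval mu * pval nu - pval mu * qval nu"

text \<open>Combining the decomposition with the unimodularity criterion: the span condition is
  equivalent to |disc mu nu| = 24, since the coefficient determinant equals disc / 24.\<close>

lemma span_criterion:
  assumes "length mu \<le> 3" "odd (sum_list mu)" "length nu \<le> 3" "odd (sum_list nu)"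
  shows "Zspan2 (m_JM mu) (m_JM nu) = Zspan2 C1 C3 \<longleftrightarrow> \<bar>disc mu nu\<bar> = 24"
proof -
  have "144 * (coeff_C1 mu * coeff_C3 nu - coeff_C1 nu * coeff_C3 mu)
      = (12 * coeff_C1 mu) * (12 * coeff_C3 nu) - (12 * coeff_C1 nu) * (12 * coeff_C3 mu)"
    by (simp add: algebra_simps)
  also have "\<dots> = 6 * disc mu nu"
    unfolding m_JM_decomposition(1,2)[OF assms(1,2)] m_JM_decomposition(1,2)[OF assms(3,4)]
    by (simp add: disc_def algebra_simps)
  finally have "24 * (coeff_C1 mu * coeff_C3 nu - coeff_C1 nu * coeff_C3 mu) = disc mu nu"
    by simp
  then have "\<bar>coeff_C1 mu * coeff_C3 nu - coeff_C1 nu * coeff_C3 mu\<bar> = 1 \<longleftrightarrow> \<bar>disc mu nu\<bar> = 24"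
    by auto
  then show ?thesis
    unfolding m_JM_decomposition(3)[OF assms(1,2)] m_JM_decomposition(3)[OF assms(3,4)]
    by (simp add: Zspan2_class_sums_iff)
qed

lemma disc_antisym: "disc mu nu = - disc nu mu"
  by (simp add: disc_def)


lemma partition_shapes:
  assumes p: "is_partition mu" and len: "length mu \<le> 3" and odd: "odd (sum_list mu)"
  obtains (one) n where "mu = [n]" "odd n"
    | (two) u w where "mu = [u, w]" "w < u" "0 < w" "odd (u + w)"
    | (three) a b c where "mu = [a, b, c]" "b \<le> a" "c \<le> b" "0 < c" "odd (a + b + c)"
proof -
  have sorted: "sorted (rev mu)" and pos: "\<forall>x\<in>set mu. 0 < x" using p by (auto simp: is_partition_def)
  consider "mu = []" | n where "mu = [n]" | u w where "mu = [u, w]" | a b c where "mu = [a, b, c]"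
    using len by (auto simp: numeral_3_eq_3 le_Suc_eq length_Suc_conv)
  then show ?thesis
  proof cases
    case (3 u w)
    then have "w \<le> u" "0 < w" "odd (u + w)" using sorted pos odd by auto
    moreover have "w \<noteq> u" using \<open>odd (u + w)\<close> by auto
    ultimately show ?thesis using 3 two by simp
  qed (use sorted pos odd one three in auto)
qed

lemma msym3_one_part: "0 < n \<Longrightarrow> msym3 [n, 0, 0] x y z = x ^ n + y ^ n + z ^ n"
  by (simp add: msym3_def arrangements3_eq sum.insert_if)

lemma msym3_two_parts:
  "w < u \<Longrightarrow> 0 < w \<Longrightarrow>
     msym3 [u, w, 0] x y z = x^u*y^w + x^w*y^u + x^u*z^w + x^w*z^u + y^u*z^w + y^w*z^u"
  by (simp add: msym3_def arrangements3_eq sum.insert_if algebra_simps)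

lemma msym3_double: "0 < k \<Longrightarrow> msym3 [k, k, 0] x y z = (x*y)^k + (x*z)^k + (y*z)^k"
  by (simp add: msym3_def arrangements3_eq sum.insert_if algebra_simps power_mult_distrib)

lemma msym3_zero: "msym3 [0, 0, 0] x y z = 1"
  by (simp add: msym3_def arrangements3_eq)

lemma msym3_shift:
  "msym3 [Suc a, Suc b, Suc c] x y z = x * y * z * msym3 [a, b, c] x y z"
proof -
  have arr: "arrangements3 [Suc a, Suc b, Suc c] = map Suc ` arrangements3 [a, b, c]"
    unfolding arrangements3_eq by auto
  have "msym3 [Suc a, Suc b, Suc c] x y z
      = (\<Sum>\<beta>\<in>arrangements3 [a, b, c]. x ^ (map Suc \<beta> ! 0) * y ^ (map Suc \<beta> ! 1) * z ^ (map Suc \<beta> ! 2))"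
    unfolding msym3_def arr by (subst sum.reindex) (auto simp: inj_on_def)
  also have "\<dots> = (\<Sum>\<beta>\<in>arrangements3 [a, b, c]. x * y * z * (x ^ (\<beta> ! 0) * y ^ (\<beta> ! 1) * z ^ (\<beta> ! 2)))"
    by (rule sum.cong[OF refl]) (auto simp: arrangements3_def mult_ac dest!: length3_cases)
  finally show ?thesis by (simp add: msym3_def sum_distrib_left)
qed


section \<open>Excluding +-12 by a computation modulo 585\<close>

lemma pow_mod_periodic:
  fixes g M :: int
  assumes M: "M dvd g ^ a * (g ^ T - 1)" and n: "a \<le> n"
  shows "g ^ (n + T * j) mod M = g ^ n mod M"
proof (induction j)
  case (Suc j)
  have "g ^ (n + T * j + T) - g ^ (n + T * j) = g ^ (n + T * j - a) * (g ^ a * (g ^ T - 1))"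
    using n by (simp add: algebra_simps power_add[symmetric])
  then have "M dvd g ^ (n + T * j + T) - g ^ (n + T * j)" using M by simp
  then have "g ^ (n + T * j + T) mod M = g ^ (n + T * j) mod M" by (simp add: mod_eq_dvd_iff)
  then show ?case using Suc.IH by (simp add: algebra_simps)
qed simp

text \<open>585 = 9 * 5 * 13 divides g^2 (g^12 - 1) for g = 2, 3, 6, so modulo 585 every exponent can
  be reduced into the range 0..13.\<close>

definition reduce_exp :: "nat \<Rightarrow> nat" where
  "reduce_exp n = (if n < 2 then n else 2 + (n - 2) mod 12)"

lemma pow_mod_585: "g \<in> {2, 3, 6} \<Longrightarrow> (g::int) ^ n mod 585 = g ^ reduce_exp n mod 585"
proof (cases "n < 2")
  case False
  assume g: "g \<in> {2, 3, 6}"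
  have "(585::int) dvd g ^ 2 * (g ^ 12 - 1)" using g by auto
  then have "g ^ (2 + (n - 2) mod 12 + 12 * ((n - 2) div 12)) mod 585 = g ^ (2 + (n - 2) mod 12) mod 585"
    by (rule pow_mod_periodic) simp
  moreover have "n = 2 + (n - 2) mod 12 + 12 * ((n - 2) div 12)" using False by simp
  ultimately show ?thesis using False by (metis reduce_exp_def)
qed (simp add: reduce_exp_def)

lemma reduce_exp_props:
  "reduce_exp n \<le> 13" "even (reduce_exp n) \<longleftrightarrow> even n" "2 \<le> n \<Longrightarrow> 2 \<le> reduce_exp n"
proof -
  have "even (2 + (n - 2) mod 12) \<longleftrightarrow> even n" if "2 \<le> n"
  proof -
    have "even (2 + (n - 2) mod 12) \<longleftrightarrow> even (n - 2)" by (simp add: dvd_mod_iff)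
    also have "\<dots> \<longleftrightarrow> even n" using that by (simp add: dvd_diff_nat)
    finally show ?thesis .
  qed
  then show "reduce_exp n \<le> 13" "even (reduce_exp n) \<longleftrightarrow> even n" "2 \<le> n \<Longrightarrow> 2 \<le> reduce_exp n"
    by (auto simp: reduce_exp_def)
qed

lemma small_odd: "x \<le> 13 \<Longrightarrow> odd x \<Longrightarrow> x \<in> set [1, 3, 5, 7, 9, 11, 13::nat]"
proof -
  assume "x \<le> 13" "odd x"
  then have "x \<in> set [0..<14]" "odd x" by auto
  then show ?thesis by (simp add: upt_rec) (elim disjE; simp)
qed

lemma small_even: "x \<le> 13 \<Longrightarrow> even x \<Longrightarrow> 2 \<le> x \<Longrightarrow> x \<in> set [2, 4, 6, 8, 10, 12::nat]"
proof -
  assume "x \<le> 13" "even x" "2 \<le> x"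
  then have "x \<in> set [0..<14]" "even x" "x \<noteq> 0" by auto
  then show ?thesis by (simp add: upt_rec) (elim disjE; simp)
qed

lemma reduce_exp_odd: "odd n \<Longrightarrow> reduce_exp n \<in> set [1, 3, 5, 7, 9, 11, 13]"
  using reduce_exp_props(1,2) by (intro small_odd) auto

lemma reduce_exp_even_pos: "even n \<Longrightarrow> 0 < n \<Longrightarrow> reduce_exp n \<in> set [2, 4, 6, 8, 10, 12]"
  using reduce_exp_props(1,2,3)[of n] by (intro small_even) auto

text \<open>The values m_{k,k}(1,2,3) and m_{a,b}(1,2,3) (for a \<noteq> b) that occur below.\<close>

definition pow_sum :: "nat \<Rightarrow> int" where
  "pow_sum k = 2 ^ k + 3 ^ k + 6 ^ k"

definition sym2 :: "nat \<Rightarrow> nat \<Rightarrow> int" where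
  "sym2 a b = 2^a + 2^b + 3^a + 3^b + 2^a * 3^b + 2^b * 3^a"

lemma residues_one_part:
  "list_all (\<lambda>n. list_all (\<lambda>k. (3 * 2^n * pow_sum k - (1 + 2^n + 3^n)) mod 585 \<notin> {12, 573})
     [1, 3, 5, 7, 9, 11, 13]) [1, 3, 5, 7, 9, 11, 13]"
  by code_simp

lemma residues_two_parts:
  "list_all (\<lambda>a. list_all (\<lambda>b. list_all (\<lambda>k. (6 * 2^a * pow_sum k - sym2 a b) mod 585 \<notin> {12, 573})
     [1, 3, 5, 7, 9, 11, 13]) [2, 4, 6, 8, 10, 12]) [1, 3, 5, 7, 9, 11, 13]"
  by code_simp

lemma mod_585_not_pm12: "(E::int) mod 585 \<notin> {12, 573} \<Longrightarrow> E \<noteq> 12 \<and> E \<noteq> -12"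
  by auto

lemma one_part_not_pm12:
  assumes "odd n" "odd k"
  shows "3 * 2^n * pow_sum k - (1 + 2^n + 3^n) \<noteq> 12 \<and> 3 * 2^n * pow_sum k - (1 + 2^n + 3^n) \<noteq> -12"
proof (rule mod_585_not_pm12)
  have "(3 * 2^n * pow_sum k - (1 + 2^n + 3^n)) mod 585
      = (3 * 2^reduce_exp n * pow_sum (reduce_exp k) - (1 + 2^reduce_exp n + 3^reduce_exp n)) mod 585"
    unfolding pow_sum_def
    by (intro mod_add_cong mod_diff_cong mod_mult_cong pow_mod_585 refl) auto
  moreover have "(3 * 2^reduce_exp n * pow_sum (reduce_exp k)
      - (1 + 2^reduce_exp n + 3^reduce_exp n)) mod 585 \<notin> {12, 573}"
    using residues_one_part reduce_exp_odd[OF assms(1)] reduce_exp_odd[OF assms(2)]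
    unfolding list_all_iff by blast
  ultimately show "(3 * 2^n * pow_sum k - (1 + 2^n + 3^n)) mod 585 \<notin> {12, 573}" by simp
qed

lemma two_parts_not_pm12:
  assumes "odd a" "even b" "0 < b" "odd k"
  shows "6 * 2^a * pow_sum k - sym2 a b \<noteq> 12 \<and> 6 * 2^a * pow_sum k - sym2 a b \<noteq> -12"
proof (rule mod_585_not_pm12)
  have "(6 * 2^a * pow_sum k - sym2 a b) mod 585
      = (6 * 2^reduce_exp a * pow_sum (reduce_exp k) - sym2 (reduce_exp a) (reduce_exp b)) mod 585"
    unfolding pow_sum_def sym2_def
    by (intro mod_add_cong mod_diff_cong mod_mult_cong pow_mod_585 refl) auto
  moreover have "(6 * 2^reduce_exp a * pow_sum (reduce_exp k)
      - sym2 (reduce_exp a) (reduce_exp b)) mod 585 \<notin> {12, 573}"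
    using residues_two_parts reduce_exp_odd[OF assms(1)] reduce_exp_even_pos[OF assms(2,3)]
      reduce_exp_odd[OF assms(4)]
    unfolding list_all_iff by blast
  ultimately show "(6 * 2^a * pow_sum k - sym2 a b) mod 585 \<notin> {12, 573}" by simp
qed


lemma sym2_commute: "sym2 a b = sym2 b a"
  by (simp add: sym2_def algebra_simps)

lemma short_partition_values:
  assumes p: "is_partition mu" and len: "length mu \<le> 2" and odd: "odd (sum_list mu)"
  obtains (one) n where "mu = [n]" "odd n" "pval mu = 1 + 2^n + 3^n" "qval mu = 2^n"
    | (two) a b where "length mu = 2" "odd a" "even b" "0 < b"
        "pval mu = sym2 a b" "qval mu = 2^(a + 1)"
proof -
  have "length mu \<le> 3" using len by simp
  from p this odd show ?thesis
  proof (cases rule: partition_shapes)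
    case (one n)
    then have "0 < n" by (auto intro: odd_pos)
    then show ?thesis
      using one that(1) msym3_one_part[of n]
      by (simp add: pval_def qval_def pad3_def numeral_2_eq_2)
  next
    case (two u w)
    have pad: "pad3 mu = [u, w, 0]" by (simp add: two pad3_def)
    have p_val: "pval mu = sym2 u w"
      using msym3_two_parts[OF two(2,3)] by (simp add: pval_def pad sym2_def algebra_simps)
    have q_val: "qval mu = 2^w + 2^u + (-1)^w + (-1)^u + 2^u * (-1)^w + 2^w * (-1)^u"
      using msym3_two_parts[OF two(2,3)] by (simp add: qval_def pad)
    show ?thesis
    proof (cases "odd u")
      case True
      then have "even w" using two(4) by simp
      then show ?thesis using True two that(2)[of u w] p_val q_val by simp
    next
      case False
      then have "odd w" using two(4) by simp
      then show ?thesis using False two that(2)[of w u] p_val q_val sym2_commute by simp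
    qed
  next
    case (three a b c) then show ?thesis using len by simp
  qed
qed

lemma values_one: "pval [1] = 6" "qval [1] = 2"
  by (simp_all add: pval_def qval_def pad3_def numeral_2_eq_2 msym3_one_part)

lemma values_three: "pval [3] = 36" "qval [3] = 8"
  by (simp_all add: pval_def qval_def pad3_def numeral_2_eq_2 msym3_one_part power3_eq_cube)

lemma short_pval_pos:
  assumes "is_partition mu" "length mu \<le> 2" "odd (sum_list mu)"
  shows "0 < pval mu"
  using assms by (cases rule: short_partition_values) (simp_all add: sym2_def add_pos_pos)

lemma pow2_dvd4: "2 \<le> e \<Longrightarrow> 4 dvd (2::int) ^ e \<and> 4 \<le> (2::int) ^ e"
proof -
  assume "2 \<le> e"
  then obtain d where "e = d + 2" by (metis add.commute le_Suc_ex)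
  moreover have "(1::int) \<le> 2 ^ d" by simp
  ultimately show ?thesis by (simp add: power_add)
qed

lemma short_qval_dvd4:
  assumes "is_partition mu" "length mu \<le> 2" "odd (sum_list mu)" "mu \<noteq> [1]"
  shows "4 dvd qval mu \<and> 4 \<le> qval mu"
  using assms(1-3)
proof (cases rule: short_partition_values)
  case (one n)
  then have "2 \<le> n" using assms(4) by (cases n) auto
  then show ?thesis using one pow2_dvd4 by simp
next
  case (two a b)
  then have "2 \<le> a + 1" using odd_pos[of a] by linarith
  then show ?thesis using two pow2_dvd4[of "a + 1"] by simp
qed

text \<open>Integrality of the coefficient of C_(1) forces 4 | p + 3q, hence 4 | p.\<close>

lemma short_pval_dvd4:
  assumes "is_partition mu" "length mu \<le> 2" "odd (sum_list mu)" "mu \<noteq> [1]"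
  shows "4 dvd pval mu"
proof -
  have "pval mu + 3 * qval mu = 4 * (3 * coeff_C1 mu)"
    using m_JM_decomposition(1)[of mu] assms(2,3) by simp
  then have "4 dvd pval mu + 3 * qval mu" by simp
  moreover have "4 dvd 3 * qval mu" using short_qval_dvd4[OF assms] by simp
  ultimately show ?thesis by (simp add: dvd_add_left_iff)
qed

lemma three_pow_bound: "5 \<le> n \<Longrightarrow> (2::int) ^ (n + 1) + 12 \<le> 3 ^ n"
proof (induction n rule: nat_induct_at_least)
  case (Suc n)
  have "(0::int) \<le> 2 ^ n" "(2::int) ^ (Suc n + 1) = 4 * 2 ^ n" "(3::int) ^ Suc n = 3 * 3 ^ n"
    "(2::int) ^ (n + 1) = 2 * 2 ^ n" by simp_all
  then show ?case using Suc.IH by linarith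
qed simp

lemma short_gap:
  assumes "is_partition mu" "length mu \<le> 2" "odd (sum_list mu)" "mu \<noteq> [1]" "mu \<noteq> [3]"
  shows "12 < pval mu - 3 * qval mu"
  using assms(1-3)
proof (cases rule: short_partition_values)
  case (one n)
  then have "n \<noteq> 1" "n \<noteq> 3" using assms(4,5) by auto
  then have "5 \<le> n" using \<open>odd n\<close> by presburger
  then show ?thesis using one three_pow_bound[of n] by simp
next
  case (two a b)
  have "2 \<le> b" "1 \<le> a" using two odd_pos[of a] by (auto elim: evenE)
  then have "(3::int) ^ 2 \<le> 3 ^ b" "(2::int) ^ 2 \<le> 2 ^ b" "(3::int) ^ 1 \<le> 3 ^ a"
    by (intro power_increasing; simp)+
  then have "9 \<le> (3::int) ^ b" "4 \<le> (2::int) ^ b" "3 \<le> (3::int) ^ a" by simp_all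
  moreover have "2 ^ a * 9 \<le> (2::int) ^ a * 3 ^ b" using \<open>9 \<le> 3 ^ b\<close> by simp
  moreover have "(0::int) < 2 ^ a" "(0::int) < 2 ^ b * 3 ^ a" by simp_all
  moreover have "pval mu - 3 * qval mu = 2^b + 3^a + 3^b + 2^a * 3^b + 2^b * 3^a - 5 * 2^a"
    using two by (simp add: sym2_def)
  ultimately show ?thesis by linarith
qed

lemma short_not_pm12:
  assumes "is_partition mu" "length mu \<le> 2" "odd (sum_list mu)" "odd k"
  shows "3 * qval mu * pow_sum k - pval mu \<noteq> 12 \<and> 3 * qval mu * pow_sum k - pval mu \<noteq> -12"
  using assms(1-3)
proof (cases rule: short_partition_values)
  case (one n)
  then show ?thesis using one_part_not_pm12[OF one(2) assms(4)] by (simp add: mult_ac)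
next
  case (two a b)
  have "3 * qval mu * pow_sum k - pval mu = 6 * 2 ^ a * pow_sum k - sym2 a b"
    using two by simp
  then show ?thesis using two_parts_not_pm12[OF two(2,3,4) assms(4)] by simp
qed


text \<open>Removing the first column: for three parts p = 6 P and q = -2 Q with P, Q the values of
  m_{mu-1} at (1,2,3) and (1,2,-1).\<close>

lemma long_partition_values:
  assumes "is_partition mu" "length mu = 3" "odd (sum_list mu)"
  obtains r0 r1 r2 where "mu = [Suc r0, Suc r1, Suc r2]" "r1 \<le> r0" "r2 \<le> r1" "even (r0 + r1 + r2)"
    "pval mu = 6 * msym3 [r0, r1, r2] 1 2 3" "qval mu = - 2 * msym3 [r0, r1, r2] 1 2 (-1)"
proof -
  have "length mu \<le> 3" using assms(2) by simp
  from assms(1) this assms(3) obtain a b c where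
    abc: "mu = [a, b, c]" "b \<le> a" "c \<le> b" "0 < c" "odd (a + b + c)"
    by (cases rule: partition_shapes) (use assms(2) in auto)
  moreover define r0 r1 r2 where "r0 = a - 1" "r1 = b - 1" "r2 = c - 1"
  ultimately have "a = Suc r0" "b = Suc r1" "c = Suc r2" by auto
  with abc show ?thesis
    by (intro that) (auto simp: pval_def qval_def pad3_def msym3_shift)
qed

lemma four_dvd_pow3_diff: "(4::int) dvd 3 ^ m - (- 1) ^ m"
proof (induction m)
  case (Suc m)
  have "(3::int) ^ Suc m - (- 1) ^ Suc m = 3 * (3 ^ m - (- 1) ^ m) + 4 * (- 1) ^ m"
    by (simp add: algebra_simps)
  then show ?case by (simp only:) (intro dvd_add dvd_mult Suc.IH dvd_triv_left)
qed simp

text \<open>m_r(1,2,3) and m_r(1,2,-1) agree modulo 4, since 3 and -1 do.\<close>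

lemma msym3_congruent_mod4: "4 dvd msym3 r 1 2 3 - msym3 r 1 2 (-1)"
proof -
  have "msym3 r 1 2 3 - msym3 r 1 2 (-1)
      = (\<Sum>\<beta>\<in>arrangements3 r. 2 ^ (\<beta> ! 1) * (3 ^ (\<beta> ! 2) - (- 1) ^ (\<beta> ! 2)))"
    by (simp add: msym3_def sum_subtractf[symmetric] algebra_simps)
  also have "4 dvd \<dots>" by (intro dvd_sum dvd_mult four_dvd_pow3_diff)
  finally show ?thesis .
qed

lemma pow3_plus_pow_minus1: "(2::int) \<le> 3 ^ m + (- 1) ^ m"
proof (cases m)
  case (Suc j)
  have "(3::int) ^ 1 \<le> 3 ^ m" using Suc by (intro power_increasing) auto
  moreover have "(- 1::int) ^ m \<ge> - 1" by (cases "even m") auto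
  ultimately show ?thesis by simp
qed simp

text \<open>For r0 \<ge> 1 (that is, mu other than (1,1,1)), P + Q is at least 4: every term of P + Q is
  non-negative and the term of the arrangement (r1, r0, r2) is at least 4.\<close>

lemma msym3_sum_lower:
  assumes "1 \<le> r0"
  shows "4 \<le> msym3 [r0, r1, r2] 1 2 3 + msym3 [r0, r1, r2] 1 2 (-1)"
proof -
  let ?f = "\<lambda>\<beta>. (2::int) ^ (\<beta> ! 1) * (3 ^ (\<beta> ! 2) + (- 1) ^ (\<beta> ! 2))"
  have sum: "msym3 [r0, r1, r2] 1 2 3 + msym3 [r0, r1, r2] 1 2 (-1) = (\<Sum>\<beta>\<in>arrangements3 [r0, r1, r2]. ?f \<beta>)"
    by (simp add: msym3_def sum.distrib[symmetric] algebra_simps)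
  have "(2::int) ^ 1 \<le> 2 ^ r0" using assms by (intro power_increasing) auto
  then have "(2::int) * 2 \<le> ?f [r1, r0, r2]"
    using pow3_plus_pow_minus1[of r2] by (simp only: nth.simps) (intro mult_mono; simp)
  also have "\<dots> \<le> (\<Sum>\<beta>\<in>arrangements3 [r0, r1, r2]. ?f \<beta>)"
    using pow3_plus_pow_minus1 order_trans[OF zero_le_numeral pow3_plus_pow_minus1]
    by (intro member_le_sum) (auto simp: arrangements3_eq intro!: mult_nonneg_nonneg)
  finally show ?thesis using sum by simp
qed

text \<open>For r sorted with |r| even, m_r(1,2,-1) is even unless r = (0,0,0) or r = (k,k,0):
  with three positive parts it is a multiple of -2, and otherwise the powers of -1 pair up.\<close>

lemma msym3_odd_at_minus1:
  assumes "r1 \<le> r0" "r2 \<le> r1" "even (r0 + r1 + r2)" "odd (msym3 [r0, r1, r2] 1 2 (-1))"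
  shows "(r0 = 0 \<and> r1 = 0 \<and> r2 = 0) \<or> (r2 = 0 \<and> r0 = r1 \<and> 0 < r0)"
proof (rule ccontr)
  assume not_special: "\<not> ?thesis"
  show False
  proof (cases r2)
    case (Suc s2)
    then have "r0 = Suc (r0 - 1)" "r1 = Suc (r1 - 1)" using assms(1,2) by auto
    then show False using assms(4) Suc msym3_shift[of "r0 - 1" "r1 - 1" s2] by simp
  next
    case 0
    show False
    proof (cases "r1 = 0")
      case True
      then have "0 < r0" "even r0" using not_special assms(3) 0 by auto
      then show False using assms(4) True 0 msym3_one_part[of r0] by simp
    next
      case False
      then have "r1 < r0" "0 < r1" using not_special assms(1) 0 by auto
      moreover have "even ((- 1::int) ^ r1 + (- 1) ^ r0)" using assms(3) 0 by (cases "even r1") auto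
      ultimately show False using assms(4) 0 msym3_two_parts[of r1 r0 1 2 "-1"] by simp
    qed
  qed
qed

lemma msym3_odd_at_minus1_cases:
  assumes "r1 \<le> r0" "r2 \<le> r1" "even (r0 + r1 + r2)" "odd (msym3 [r0, r1, r2] 1 2 (-1))"
  obtains (positive) "1 \<le> msym3 [r0, r1, r2] 1 2 3" "0 < msym3 [r0, r1, r2] 1 2 (-1)"
    | (minus_one) k where "odd k" "msym3 [r0, r1, r2] 1 2 3 = pow_sum k"
        "msym3 [r0, r1, r2] 1 2 (-1) = -1"
  using msym3_odd_at_minus1[OF assms]
proof
  assume "r0 = 0 \<and> r1 = 0 \<and> r2 = 0"
  then show ?thesis using positive by (simp add: msym3_zero)
next
  assume r: "r2 = 0 \<and> r0 = r1 \<and> 0 < r0"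
  have P: "msym3 [r0, r1, r2] 1 2 3 = pow_sum r0"
    using r msym3_double[of r0 1 2 3] by (simp add: pow_sum_def)
  have Q: "msym3 [r0, r1, r2] 1 2 (-1) = 2 ^ r0 + (- 1) ^ r0 + (- 2) ^ r0"
    using r msym3_double[of r0 1 2 "-1"] by simp
  show ?thesis
  proof (cases "even r0")
    case True
    have "1 \<le> pow_sum r0" unfolding pow_sum_def
      using one_le_power[of "2::int" r0] zero_le_power[of "3::int" r0] zero_le_power[of "6::int" r0]
      by linarith
    then show ?thesis using positive P Q True by simp
  next
    case False
    then show ?thesis using minus_one[of r0] P Q by simp
  qed
qed


lemma abs_ne_24_if_16_dvd: "(16::int) dvd x \<Longrightarrow> \<bar>x\<bar> \<noteq> 24"
proof
  assume "16 dvd x" "\<bar>x\<bar> = 24"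
  then have "x = 24 \<or> x = -24" "16 dvd x" by arith+
  then show False by auto
qed

lemma disc_one_short:
  assumes "is_partition nu" "length nu \<le> 2" "odd (sum_list nu)" "nu \<noteq> [1]"
  shows "\<bar>disc [1] nu\<bar> = 24 \<longleftrightarrow> nu = [3]"
proof -
  have disc: "disc [1] nu = 2 * (pval nu - 3 * qval nu)" unfolding disc_def values_one by simp
  show ?thesis
  proof (cases "nu = [3]")
    case False
    then show ?thesis using disc short_gap[OF assms False] by simp
  qed (use disc values_three in simp)
qed

text \<open>Two partitions with at most two parts, neither equal to (1): both p and q are divisible
  by 4, so 16 divides the discriminant.\<close>

lemma disc_short_short:
  assumes mu: "is_partition mu" "length mu \<le> 2" "odd (sum_list mu)" "mu \<noteq> [1]"
    and nu: "is_partition nu" "length nu \<le> 2" "odd (sum_list nu)" "nu \<noteq> [1]"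
  shows "\<bar>disc mu nu\<bar> \<noteq> 24"
proof -
  obtain a1 a2 b1 b2 where "qval mu = 4 * a1" "pval mu = 4 * a2" "qval nu = 4 * b1" "pval nu = 4 * b2"
    using short_qval_dvd4[OF mu] short_pval_dvd4[OF mu] short_qval_dvd4[OF nu] short_pval_dvd4[OF nu]
    by (metis dvdE)
  then have "disc mu nu = 16 * (a1 * b2 - a2 * b1)" by (simp add: disc_def algebra_simps)
  then show ?thesis by (intro abs_ne_24_if_16_dvd) simp
qed

lemma disc_one_long:
  assumes "is_partition nu" "length nu = 3" "odd (sum_list nu)"
  shows "\<bar>disc [1] nu\<bar> = 24 \<longleftrightarrow> nu = [1, 1, 1]"
  using assms
proof (cases rule: long_partition_values)
  case (1 r0 r1 r2)
  let ?P = "msym3 [r0, r1, r2] 1 2 3" and ?Q = "msym3 [r0, r1, r2] 1 2 (-1)"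
  have disc: "disc [1] nu = 12 * (?P + ?Q)" using 1(5,6) unfolding disc_def values_one by simp
  show ?thesis
  proof (cases "r0 = 0")
    case True
    then show ?thesis using 1 disc by (simp add: msym3_zero)
  next
    case False
    then show ?thesis using 1 disc msym3_sum_lower[of r0 r1 r2] by simp
  qed
qed

text \<open>The delicate case: a partition with at most two parts other than (1) against one with
  three parts.  Apart from divisibility by 16 and size, it needs the computation modulo 585.\<close>

lemma disc_short_long:
  assumes mu: "is_partition mu" "length mu \<le> 2" "odd (sum_list mu)" "mu \<noteq> [1]"
    and nu: "is_partition nu" "length nu = 3" "odd (sum_list nu)"
  shows "\<bar>disc mu nu\<bar> \<noteq> 24"
  using nu
proof (cases rule: long_partition_values)
  case (1 r0 r1 r2)
  let ?P = "msym3 [r0, r1, r2] 1 2 3" and ?Q = "msym3 [r0, r1, r2] 1 2 (-1)"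
  have disc: "disc mu nu = 6 * qval mu * ?P + 2 * pval mu * ?Q" using 1 by (simp add: disc_def)
  obtain a b where ab: "qval mu = 4 * a" "pval mu = 4 * b"
    using short_qval_dvd4[OF mu] short_pval_dvd4[OF mu] by (metis dvdE)
  have q4: "4 \<le> qval mu" and p0: "0 < pval mu"
    using short_qval_dvd4[OF mu] short_pval_pos[OF mu(1-3)] by auto
  show ?thesis
  proof (cases "even ?Q")
    case True
    obtain c d where "?Q = 2 * c" "?P - ?Q = 4 * d"
      using True msym3_congruent_mod4[of "[r0, r1, r2]"] by (metis evenE dvdE)
    then have "disc mu nu = 16 * (3 * a * c + 6 * a * d + b * c)"
      unfolding disc ab by (simp add: algebra_simps)
    then show ?thesis by (intro abs_ne_24_if_16_dvd) simp
  next
    case False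
    with 1(2-4) show ?thesis
    proof (cases rule: msym3_odd_at_minus1_cases)
      case positive
      then have "4 * 1 \<le> qval mu * ?P" "0 < pval mu * ?Q"
        using q4 p0 mult_mono[OF q4, of 1 ?P] by simp_all
      then show ?thesis using disc by linarith
    next
      case (minus_one k)
      then have "disc mu nu = 2 * (3 * qval mu * pow_sum k - pval mu)" using disc by simp
      then show ?thesis using short_not_pm12[OF mu(1-3) minus_one(1)] by auto
    qed
  qed
qed

text \<open>Two partitions with three parts: p = 6P, q = -2Q with P = Q (mod 4), so 48 | disc.\<close>

lemma disc_long_long:
  assumes "is_partition mu" "length mu = 3" "odd (sum_list mu)"
    and "is_partition nu" "length nu = 3" "odd (sum_list nu)"
  shows "\<bar>disc mu nu\<bar> \<noteq> 24"
proof -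
  obtain r0 r1 r2 where r: "pval mu = 6 * msym3 [r0, r1, r2] 1 2 3" "qval mu = - 2 * msym3 [r0, r1, r2] 1 2 (-1)"
    using long_partition_values[OF assms(1-3)] by metis
  obtain s0 s1 s2 where s: "pval nu = 6 * msym3 [s0, s1, s2] 1 2 3" "qval nu = - 2 * msym3 [s0, s1, s2] 1 2 (-1)"
    using long_partition_values[OF assms(4-6)] by metis
  obtain d e where "msym3 [r0, r1, r2] 1 2 3 = msym3 [r0, r1, r2] 1 2 (-1) + 4 * d"
    "msym3 [s0, s1, s2] 1 2 3 = msym3 [s0, s1, s2] 1 2 (-1) + 4 * e"
    using msym3_congruent_mod4 by (metis dvdE add.commute diff_add_cancel)
  then have "disc mu nu = 16 * (3 * (d * msym3 [s0, s1, s2] 1 2 (-1) - e * msym3 [r0, r1, r2] 1 2 (-1)))"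
    unfolding disc_def r s by (simp add: algebra_simps)
  then show ?thesis by (intro abs_ne_24_if_16_dvd) simp
qed

lemma disc_criterion_short:
  assumes mu: "is_partition mu" "length mu \<le> 2" "odd (sum_list mu)"
    and nu: "is_partition nu" "length nu \<le> 3" "odd (sum_list nu)" and "mu \<noteq> nu"
  shows "\<bar>disc mu nu\<bar> = 24 \<longleftrightarrow> {mu, nu} = {[1], [1,1,1]} \<or> {mu, nu} = {[1], [3]}"
proof (cases "length nu \<le> 2")
  case True
  then have "{mu, nu} \<noteq> {[1], [1,1,1]}" using mu(2) by (auto simp: doubleton_eq_iff)
  moreover have "\<bar>disc mu nu\<bar> = 24 \<longleftrightarrow> {mu, nu} = {[1], [3]}"
  proof (cases "mu = [1]")
    case True
    then show ?thesis using disc_one_short[OF nu(1) \<open>length nu \<le> 2\<close> nu(3)] \<open>mu \<noteq> nu\<close>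
      by (auto simp: doubleton_eq_iff)
  next
    case False
    note mu1 = False
    show ?thesis
    proof (cases "nu = [1]")
      case True
      then show ?thesis using disc_one_short[OF mu False] disc_antisym[of mu nu]
        by (auto simp: doubleton_eq_iff)
    qed (use disc_short_short[OF mu mu1 nu(1) True nu(3)] mu1 in \<open>auto simp: doubleton_eq_iff\<close>)
  qed
  ultimately show ?thesis by simp
next
  case False
  then have "length nu = 3" using nu(2) by simp
  then have "{mu, nu} \<noteq> {[1], [3]}" "{mu, nu} = {[1], [1,1,1]} \<longleftrightarrow> mu = [1] \<and> nu = [1,1,1]"
    using mu(2) by (auto simp: doubleton_eq_iff)
  moreover have "\<bar>disc mu nu\<bar> = 24 \<longleftrightarrow> mu = [1] \<and> nu = [1,1,1]"
    using disc_one_long[OF nu(1) \<open>length nu = 3\<close> nu(3)] disc_short_long[OF mu _ nu(1) \<open>length nu = 3\<close> nu(3)]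
    by (cases "mu = [1]") auto
  ultimately show ?thesis by simp
qed

lemma disc_criterion:
  assumes mu: "is_partition mu" "length mu \<le> 3" "odd (sum_list mu)"
    and nu: "is_partition nu" "length nu \<le> 3" "odd (sum_list nu)" and "mu \<noteq> nu"
  shows "\<bar>disc mu nu\<bar> = 24 \<longleftrightarrow> {mu, nu} = {[1], [1,1,1]} \<or> {mu, nu} = {[1], [3]}"
proof -
  consider "length mu \<le> 2" | "length nu \<le> 2" | "length mu = 3" "length nu = 3"
    using mu(2) nu(2) by linarith
  then show ?thesis
  proof cases
    case 1
    show ?thesis using disc_criterion_short[OF mu(1) 1 mu(3) nu assms(7)] .
  next
    case 2
    then show ?thesis using disc_criterion_short[OF nu(1) 2 nu(3) mu] assms(7) disc_antisym[of mu nu]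
      by (simp add: insert_commute)
  next
    case 3
    then have "{mu, nu} \<noteq> {[1], [1,1,1]}" "{mu, nu} \<noteq> {[1], [3]}" by (auto simp: doubleton_eq_iff)
    then show ?thesis using disc_long_long[OF mu(1) 3(1) mu(3) nu(1) 3(2) nu(3)] by simp
  qed
qed


theorem lemma3p4:
  assumes "is_partition mu" and "is_partition nu" and "mu \<noteq> nu"
    and "odd (sum_list mu)" and "odd (sum_list nu)"
    and "length mu \<le> 3" and "length nu \<le> 3"
  shows "Zspan2 (m_JM mu) (m_JM nu) = Zspan2 C1 C3 \<longleftrightarrow>
           {mu, nu} = {[1], [1,1,1]} \<or> {mu, nu} = {[1], [3]}"
proof -
  have "Zspan2 (m_JM mu) (m_JM nu) = Zspan2 C1 C3 \<longleftrightarrow> \<bar>disc mu nu\<bar> = 24"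
    by (rule span_criterion[OF assms(6,4,7,5)])
  also have "\<dots> \<longleftrightarrow> {mu, nu} = {[1], [1,1,1]} \<or> {mu, nu} = {[1], [3]}"
    using assms by (intro disc_criterion) auto
  finally show ?thesis .
qed

end
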